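(* Let $n\ge1$, $\pi\in\Pi_n$, and let $j$ be a closer or a transient of $\pi$. Then $$\mathrm{al}(\varphi(\pi);j)=\mathrm{al}(\pi;j),\qquad \mathrm{cr}(\varphi(\pi);j)=\mathrm{ne}(\pi;j),\qquad \mathrm{ne}(\varphi(\pi);j)=\mathrm{cr}(\pi;j),$$ where $\varphi:\Pi_n\to\Pi_n$ is the map described below. Construction of $\varphi(\pi)$: start with $V'=\emptyset$ and an empty edge set $E'$. For $i=1,\dots,n$: if $i$ is an opener of $\pi$, add $i$ to $V'$; if $i$ is a singleton of $\pi$, do nothing; if $i$ is a closer or transient of $\pi$, let $x$ be the $\gamma_i(\pi)$-th largest element of $V'$, add the edge $(x,i)$ to $E'$, remove $x$ from $V'$, and if $i$ is a transient of $\pi$ add $i$ to $V'$. Then $\varphi(\pi)$ is the partition of $[n]$ whose edge set is $E'$.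
   Context: A partition of $[n]=\{1,\dots,n\}$ is a set of pairwise disjoint nonempty subsets (blocks) whose union is $[n]$; $\Pi_n$ is the set of partitions of $[n]$. The edges of $\pi$ are the pairs $(i,j)$, $i<j$, with $i,j$ consecutive elements of the same block; $i$ is the left-hand and $j$ the right-hand endpoint. For a block $B$ with $|B|\ge2$, its minimum is an opener, its maximum a closer, its other elements transients; the element of a one-element block is a singleton. Two edges $e_1=(i_1,j_1)$, $e_2=(i_2,j_2)$ form a crossing with $e_1$ as initial edge if $i_1<i_2<j_1<j_2$; a nesting with $e_2$ as interior edge if $i_1<i_2<j_2<j_1$; an alignment with $e_1$ as initial edge if $i_1<j_1\le i_2<j_2$. For a closer or transient $j$ of $\pi$, $\mathrm{cr}(\pi;j)$ (resp. $\mathrm{ne}(\pi;j)$, $\mathrm{al}(\pi;j)$) is the number of crossings whose initial edge (resp. nestings whose interior edge, alignments whose initial edge) has $j$ as right-hand endpoint. For $i\in[n]$, the vacant vertices of $\pi$ before $i$ are the elements $x\le i-1$ that are the left endpoint of an edge $(x,y)$ of $\pi$ with $y\ge i$. For $i$ a closer or transient with edge $(j,i)$, $j<i$, $\gamma_i(\pi)$ is the rank of $j$ among the vacant vertices before $i$ in increasing order. (The construction of $\varphi$ is well defined and $\varphi(\pi)$ has the same closers and transients as $\pi$.) *)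

theory Defs
  imports Main "HOL-Library.Disjoint_Sets"
begin

text \<open>Set partitions of [n] = {1..n} are represented by 'partition_on {1..n} P'.\<close>

definition edges :: "nat set set \<Rightarrow> (nat \<times> nat) set" where
  "edges P = {(i, j). \<exists>B\<in>P. i \<in> B \<and> j \<in> B \<and> i < j \<and> (\<forall>k\<in>B. \<not> (i < k \<and> k < j))}"

definition opener :: "nat set set \<Rightarrow> nat \<Rightarrow> bool" where
  "opener P i \<longleftrightarrow> (\<exists>B\<in>P. 2 \<le> card B \<and> i = Min B)"

definition closer :: "nat set set \<Rightarrow> nat \<Rightarrow> bool" where
  "closer P i \<longleftrightarrow> (\<exists>B\<in>P. 2 \<le> card B \<and> i = Max B)"

definition transient :: "nat set set \<Rightarrow> nat \<Rightarrow> bool" where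
  "transient P i \<longleftrightarrow> (\<exists>B\<in>P. 2 \<le> card B \<and> i \<in> B \<and> i \<noteq> Min B \<and> i \<noteq> Max B)"

definition singleton_el :: "nat set set \<Rightarrow> nat \<Rightarrow> bool" where
  "singleton_el P i \<longleftrightarrow> {i} \<in> P"

definition cr :: "nat set set \<Rightarrow> nat \<Rightarrow> nat" where
  "cr P j = card {((i1, j1), (i2, j2)). (i1, j1) \<in> edges P \<and> (i2, j2) \<in> edges P \<and>
      j1 = j \<and> i1 < i2 \<and> i2 < j1 \<and> j1 < j2}"

definition ne :: "nat set set \<Rightarrow> nat \<Rightarrow> nat" where
  "ne P j = card {((i1, j1), (i2, j2)). (i1, j1) \<in> edges P \<and> (i2, j2) \<in> edges P \<and>
      j2 = j \<and> i1 < i2 \<and> i2 < j2 \<and> j2 < j1}"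

definition al :: "nat set set \<Rightarrow> nat \<Rightarrow> nat" where
  "al P j = card {((i1, j1), (i2, j2)). (i1, j1) \<in> edges P \<and> (i2, j2) \<in> edges P \<and>
      j1 = j \<and> i1 < j1 \<and> j1 \<le> i2 \<and> i2 < j2}"

definition vacant :: "nat set set \<Rightarrow> nat \<Rightarrow> nat set" where
  "vacant P i = {x. x \<le> i - 1 \<and> (\<exists>y. (x, y) \<in> edges P \<and> y \<ge> i)}"

definition left_end :: "nat set set \<Rightarrow> nat \<Rightarrow> nat" where
  "left_end P i = (THE j. (j, i) \<in> edges P)"

text \<open>gamma_i: rank (1-based, increasing order) of the left endpoint among the vacant vertices.\<close>
definition gamma :: "nat set set \<Rightarrow> nat \<Rightarrow> nat" where
  "gamma P i = (THE r. 1 \<le> r \<and> r \<le> card (vacant P i) \<and>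
      sorted_list_of_set (vacant P i) ! (r - 1) = left_end P i)"

fun phi_state :: "nat set set \<Rightarrow> nat \<Rightarrow> nat set \<times> (nat \<times> nat) set" where
  "phi_state P 0 = ({}, {})"
| "phi_state P (Suc i) =
     (let (V, E) = phi_state P i; m = Suc i in
      if opener P m then (insert m V, E)
      else if closer P m \<or> transient P m then
        (let x = rev (sorted_list_of_set V) ! (gamma P m - 1);
             V1 = V - {x} in
         (if transient P m then insert m V1 else V1, insert (x, m) E))
      else (V, E))"

definition partition_of_edges :: "nat \<Rightarrow> (nat \<times> nat) set \<Rightarrow> nat set set" where
  "partition_of_edges n E = {1..n} // ((E \<union> E\<inverse>)\<^sup>*)"

definition phi :: "nat \<Rightarrow> nat set set \<Rightarrow> nat set set" where
  "phi n P = partition_of_edges n (snd (phi_state P n))"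

end

theory Submission
  imports Defs
begin

(* For an edge (i, j) of a partition, the crossings whose initial edge ends at j correspond to
   the vacant vertices before j that lie above i, the nestings whose interior edge ends at j to
   those that lie below i, and the alignments whose initial edge ends at j to the left endpoints
   of edges that are >= j.  Along the construction, the set V' after step j - 1 is exactly the
   set of vacant vertices of phi(pi) before j, and it has as many elements as the vacant set of
   pi before j.  Where pi joins j to the gamma-th smallest vacant vertex, phi(pi) joins j to the
   gamma-th largest one, so the numbers of vacant vertices above and below the partner of j are
   exchanged.  Both partitions have the same left endpoints, so the alignments agree. *)

section \<open>Ranks in a sorted list\<close>

lemma sorted_list_of_set_nth_less_iff:
  assumes "finite S" "t < card S" "k < card S"
  shows "sorted_list_of_set S ! t < sorted_list_of_set S ! k \<longleftrightarrow> t < k"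
  using sorted_wrt_nth_less[OF strict_sorted_list_of_set] assms
  by (metis length_sorted_list_of_set linorder_neqE_nat not_less_iff_gr_or_eq)

lemma mem_iff_sorted_list_of_set_nth:
  "finite S \<Longrightarrow> y \<in> S \<longleftrightarrow> (\<exists>t < card S. y = sorted_list_of_set S ! t)"
  by (metis in_set_conv_nth length_sorted_list_of_set set_sorted_list_of_set)

lemma card_less_sorted_list_of_set_nth:
  assumes "finite S" "k < card S"
  shows "card {y \<in> S. y < sorted_list_of_set S ! k} = k"
proof -
  let ?s = "sorted_list_of_set S"
  have "{y \<in> S. y < ?s ! k} = (!) ?s ` {..<k}"
    using assms sorted_list_of_set_nth_less_iff[OF assms(1) _ assms(2)]
    by (auto simp: mem_iff_sorted_list_of_set_nth intro: order.strict_trans)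
  moreover have "inj_on ((!) ?s) {..<k}"
    using assms by (auto simp: inj_on_def nth_eq_iff_index_eq)
  ultimately show ?thesis by (simp add: card_image)
qed

lemma card_greater_sorted_list_of_set_nth:
  assumes "finite S" "k < card S"
  shows "card {y \<in> S. sorted_list_of_set S ! k < y} = card S - Suc k"
proof -
  let ?s = "sorted_list_of_set S"
  have "{y \<in> S. ?s ! k < y} = (!) ?s ` {k<..<card S}"
    using assms sorted_list_of_set_nth_less_iff[OF assms(1) assms(2)]
    by (auto simp: mem_iff_sorted_list_of_set_nth)
  moreover have "inj_on ((!) ?s) {k<..<card S}"
    using assms by (auto simp: inj_on_def nth_eq_iff_index_eq)
  ultimately show ?thesis by (simp add: card_image)
qed

lemma card_greater_rev_sorted_list_of_set_nth:
  assumes "finite S" "k < card S"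
  shows "card {y \<in> S. rev (sorted_list_of_set S) ! k < y} = k"
  using assms card_greater_sorted_list_of_set_nth[OF assms(1), of "card S - Suc k"]
  by (simp add: rev_nth)

lemma card_less_rev_sorted_list_of_set_nth:
  assumes "finite S" "k < card S"
  shows "card {y \<in> S. y < rev (sorted_list_of_set S) ! k} = card S - Suc k"
  using assms card_less_sorted_list_of_set_nth[OF assms(1), of "card S - Suc k"]
  by (simp add: rev_nth)

section \<open>Arc diagrams\<close>

definition arc_diagram :: "(nat \<times> nat) set \<Rightarrow> bool" where
  "arc_diagram E \<longleftrightarrow> (\<forall>(a, b) \<in> E. a < b) \<and> single_valued E \<and> single_valued (E\<inverse>)"

lemma arc_diagram_less: "arc_diagram E \<Longrightarrow> (a, b) \<in> E \<Longrightarrow> a < b"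
  unfolding arc_diagram_def by blast

lemma arc_diagram_right_unique: "arc_diagram E \<Longrightarrow> (a, b) \<in> E \<Longrightarrow> (a, b') \<in> E \<Longrightarrow> b = b'"
  unfolding arc_diagram_def by (auto dest: single_valuedD)

lemma arc_diagram_left_unique: "arc_diagram E \<Longrightarrow> (a, b) \<in> E \<Longrightarrow> (a', b) \<in> E \<Longrightarrow> a = a'"
  unfolding arc_diagram_def by (auto dest: single_valuedD)

lemma arc_diagram_insert:
  "arc_diagram E \<Longrightarrow> a < b \<Longrightarrow> a \<notin> Domain E \<Longrightarrow> b \<notin> Range E \<Longrightarrow> arc_diagram (insert (a, b) E)"
  unfolding arc_diagram_def single_valued_def by blast

lemma arc_diagram_rtrancl_le:
  assumes "arc_diagram E" "(a, b) \<in> E\<^sup>*"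
  shows "a \<le> b"
  using assms(2) by induction (auto dest: arc_diagram_less[OF assms(1)])

lemma arc_diagram_connected_rtrancl:
  assumes E: "arc_diagram E" and ab: "(a, b) \<in> (E \<union> E\<inverse>)\<^sup>*"
  shows "(a, b) \<in> E\<^sup>* \<or> (b, a) \<in> E\<^sup>*"
  using ab
proof induction
  case (step c d)
  have sv: "single_valued E" "single_valued (E\<inverse>)"
    using E unfolding arc_diagram_def by auto
  from step.hyps(2) consider "(c, d) \<in> E" | "(d, c) \<in> E" by blast
  then show ?case
  proof cases
    case 1
    then show ?thesis using step.IH single_valued_confluent[OF sv(1), of c a d] by auto
  next
    case 2
    then show ?thesis
      using step.IH single_valued_confluent[OF sv(2), of c a d]
      by (auto simp: rtrancl_converse intro: converse_rtrancl_into_rtrancl)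
  qed
qed simp

lemma arc_diagram_first_arc:
  assumes E: "arc_diagram E" and ab: "(a, b) \<in> (E \<union> E\<inverse>)\<^sup>*" "a < b"
  obtains c where "(a, c) \<in> E" "c \<le> b"
proof -
  have "(a, b) \<in> E\<^sup>*"
    using arc_diagram_connected_rtrancl[OF E ab(1)] arc_diagram_rtrancl_le[OF E, of b a] ab by auto
  then obtain c where "(a, c) \<in> E" "(c, b) \<in> E\<^sup>*"
    using ab(2) by (metis converse_rtranclE less_irrefl)
  then show thesis using that arc_diagram_rtrancl_le[OF E] by blast
qed

lemma edges_partition_of_edges:
  assumes E: "arc_diagram E" and dom: "Domain E \<subseteq> {1..n}"
  shows "edges (partition_of_edges n E) = E"
proof (intro set_eqI iffI)
  let ?R = "(E \<union> E\<inverse>)\<^sup>*"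
  have sym: "sym ?R" by (simp add: sym_Un_converse sym_rtrancl)
  fix p
  assume "p \<in> edges (partition_of_edges n E)"
  then obtain i j B where p: "p = (i, j)" and B: "B \<in> {1..n} // ?R" "i \<in> B" "j \<in> B" "i < j"
    and gap: "\<forall>k\<in>B. \<not> (i < k \<and> k < j)"
    unfolding edges_def partition_of_edges_def by auto
  from B(1) obtain x where x: "B = ?R `` {x}" by (auto elim: quotientE)
  then have "(i, j) \<in> ?R" using B sym by (blast dest: symD intro: rtrancl_trans)
  then obtain c where c: "(i, c) \<in> E" "c \<le> j" using arc_diagram_first_arc[OF E _ B(4)] by blast
  have "c \<in> B" using x B(2) c(1) by (blast intro: rtrancl_into_rtrancl)
  then have "c = j" using gap c arc_diagram_less[OF E c(1)] by force
  then show "p \<in> E" using c p by simp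
next
  let ?R = "(E \<union> E\<inverse>)\<^sup>*"
  fix p
  assume "p \<in> E"
  then obtain a b where p: "p = (a, b)" "(a, b) \<in> E" by (cases p) auto
  have B: "?R `` {a} \<in> {1..n} // ?R" using dom p(2) by (blast intro: quotientI)
  have "\<not> (a < k \<and> k < b)" if ak: "k \<in> ?R `` {a}" for k
  proof
    assume k: "a < k \<and> k < b"
    then obtain c where "(a, c) \<in> E" "c \<le> k" using ak arc_diagram_first_arc[OF E] by blast
    then show False using arc_diagram_right_unique[OF E p(2)] k by fastforce
  qed
  then show "p \<in> edges (partition_of_edges n E)"
    unfolding edges_def partition_of_edges_def using B p arc_diagram_less[OF E p(2)] by blast
qed

section \<open>Vacant vertices and the counts at an edge\<close>

lemma card_fst_arcs:
  assumes "arc_diagram E" "S \<subseteq> E"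
  shows "card (fst ` S) = card S"
proof (rule card_image, rule inj_onI)
  fix p q
  assume "p \<in> S" "q \<in> S" "fst p = fst q"
  then show "p = q" using assms arc_diagram_right_unique by (metis prod.collapse subsetD)
qed

lemma vacant_eq_left_ends:
  assumes E: "arc_diagram (edges Q)" and ij: "(i, j) \<in> edges Q"
  shows "vacant Q j = insert i (fst ` {(a, b) \<in> edges Q. a < j \<and> j < b})"
proof (intro set_eqI iffI)
  have "i < j" using arc_diagram_less[OF E ij] .
  fix x
  assume "x \<in> vacant Q j"
  then obtain y where xy: "x < j" "(x, y) \<in> edges Q" "j \<le> y"
    unfolding vacant_def using \<open>i < j\<close> by fastforce
  show "x \<in> insert i (fst ` {(a, b) \<in> edges Q. a < j \<and> j < b})"
  proof (cases "y = j")
    case True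
    then show ?thesis using arc_diagram_left_unique[OF E ij] xy by blast
  next
    case False
    then have "(x, y) \<in> {(a, b) \<in> edges Q. a < j \<and> j < b}" using xy by simp
    then show ?thesis by (intro insertI2 image_eqI[of _ _ "(x, y)"]) simp_all
  qed
next
  have "i < j" using arc_diagram_less[OF E ij] .
  fix x
  assume "x \<in> insert i (fst ` {(a, b) \<in> edges Q. a < j \<and> j < b})"
  then show "x \<in> vacant Q j" unfolding vacant_def using ij \<open>i < j\<close> by fastforce
qed

context
  fixes Q :: "nat set set" and i j :: nat
  assumes E: "arc_diagram (edges Q)" and ij: "(i, j) \<in> edges Q"
begin

lemma cr_eq_card_vacant_greater: "cr Q j = card {x \<in> vacant Q j. i < x}"
proof -
  let ?S = "{(a, b) \<in> edges Q. i < a \<and> a < j \<and> j < b}"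
  have "cr Q j = card (Pair (i, j) ` ?S)"
    unfolding cr_def
    by (rule arg_cong[where f = card]) (auto dest: arc_diagram_left_unique[OF E _ ij] intro: ij)
  also have "\<dots> = card ?S" by (rule card_image) (simp add: inj_on_def)
  also have "\<dots> = card (fst ` ?S)" by (rule card_fst_arcs[OF E, symmetric]) auto
  also have "fst ` ?S = {x \<in> vacant Q j. i < x}"
    unfolding vacant_eq_left_ends[OF E ij] by force
  finally show ?thesis .
qed

lemma ne_eq_card_vacant_less: "ne Q j = card {x \<in> vacant Q j. x < i}"
proof -
  let ?S = "{(a, b) \<in> edges Q. a < i \<and> j < b}"
  have "i < j" using arc_diagram_less[OF E ij] .
  then have "ne Q j = card ((\<lambda>p. (p, (i, j))) ` ?S)"
    unfolding ne_def
    by (rule_tac arg_cong[where f = card]) (auto dest: arc_diagram_left_unique[OF E _ ij] intro: ij)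
  also have "\<dots> = card ?S" by (rule card_image) (simp add: inj_on_def)
  also have "\<dots> = card (fst ` ?S)" by (rule card_fst_arcs[OF E, symmetric]) auto
  also have "fst ` ?S = {x \<in> vacant Q j. x < i}"
    unfolding vacant_eq_left_ends[OF E ij] using \<open>i < j\<close> by force
  finally show ?thesis .
qed

lemma al_eq_card_Domain: "al Q j = card {x \<in> Domain (edges Q). j \<le> x}"
proof -
  let ?S = "{(a, b) \<in> edges Q. j \<le> a}"
  have "i < j" using arc_diagram_less[OF E ij] .
  then have "al Q j = card (Pair (i, j) ` ?S)"
    unfolding al_def
    by (rule_tac arg_cong[where f = card])
      (auto dest: arc_diagram_left_unique[OF E _ ij] arc_diagram_less[OF E] intro: ij)
  also have "\<dots> = card ?S" by (rule card_image) (simp add: inj_on_def)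
  also have "\<dots> = card (fst ` ?S)" by (rule card_fst_arcs[OF E, symmetric]) auto
  also have "fst ` ?S = {x \<in> Domain (edges Q). j \<le> x}" by force
  finally show ?thesis .
qed

end

lemma finite_vacant: "finite (vacant P m)"
  by (rule finite_subset[of _ "{..m}"]) (auto simp: vacant_def)

lemma vacant_Suc:
  assumes "arc_diagram (edges P)"
  shows "vacant P (Suc m) = (vacant P m - {a. (a, m) \<in> edges P}) \<union> {m} \<inter> Domain (edges P)"
proof (intro set_eqI iffI)
  fix x
  assume "x \<in> vacant P (Suc m)"
  then obtain y where xy: "x \<le> m" "(x, y) \<in> edges P" "Suc m \<le> y" unfolding vacant_def by auto
  then have "(x, m) \<notin> edges P" using arc_diagram_right_unique[OF assms] by fastforce
  then show "x \<in> (vacant P m - {a. (a, m) \<in> edges P}) \<union> {m} \<inter> Domain (edges P)"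
    using xy unfolding vacant_def by (cases "x = m") auto
next
  fix x
  assume "x \<in> (vacant P m - {a. (a, m) \<in> edges P}) \<union> {m} \<inter> Domain (edges P)"
  then show "x \<in> vacant P (Suc m)"
    unfolding vacant_def using arc_diagram_less[OF assms] le_eq_less_or_eq by fastforce
qed

lemma left_end_eq: "arc_diagram (edges P) \<Longrightarrow> (a, m) \<in> edges P \<Longrightarrow> left_end P m = a"
  unfolding left_end_def by (blast intro: the_equality dest: arc_diagram_left_unique)

lemma gamma_rank:
  assumes E: "arc_diagram (edges P)" and a: "(a, m) \<in> edges P"
  shows "1 \<le> gamma P m" "gamma P m \<le> card (vacant P m)"
    "sorted_list_of_set (vacant P m) ! (gamma P m - 1) = a"
proof -
  let ?s = "sorted_list_of_set (vacant P m)"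
  have "a \<in> vacant P m" using a arc_diagram_less[OF E a] unfolding vacant_def by auto
  then obtain k where k: "k < card (vacant P m)" "?s ! k = a"
    using mem_iff_sorted_list_of_set_nth[OF finite_vacant] by metis
  have "gamma P m = Suc k"
    unfolding gamma_def left_end_eq[OF E a]
  proof (rule the_equality)
    fix r
    assume r: "1 \<le> r \<and> r \<le> card (vacant P m) \<and> ?s ! (r - 1) = a"
    then have "r - 1 < card (vacant P m)" by auto
    then have "r - 1 = k"
      using k r nth_eq_iff_index_eq[OF distinct_sorted_list_of_set, of "r - 1" "vacant P m" k] by simp
    then show "r = Suc k" using r by linarith
  qed (use k in auto)
  then show "1 \<le> gamma P m" "gamma P m \<le> card (vacant P m)" "?s ! (gamma P m - 1) = a"
    using k by auto
qed

section \<open>The edges of a partition\<close>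

lemma edgesI:
  assumes "B \<in> P" "i \<in> B" "j \<in> B" "i < j" "\<And>k. k \<in> B \<Longrightarrow> \<not> (i < k \<and> k < j)"
  shows "(i, j) \<in> edges P"
  using assms unfolding edges_def by blast

lemma two_le_card_iff_Min_neq_Max:
  fixes B :: "nat set"
  assumes "finite B" "B \<noteq> {}"
  shows "2 \<le> card B \<longleftrightarrow> Min B \<noteq> Max B"
proof -
  have "card B \<le> 1 \<longleftrightarrow> Min B = Max B"
  proof
    assume "card B \<le> 1"
    then show "Min B = Max B" using assms by (metis Max_in Min_in One_nat_def card_le_Suc0_iff_eq)
  next
    assume "Min B = Max B"
    then show "card B \<le> 1" using assms
      by (metis Max_ge Min_le One_nat_def card_le_Suc0_iff_eq le_antisym)
  qed
  then show ?thesis by linarith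
qed

context
  fixes n :: nat and P :: "nat set set"
  assumes P: "partition_on {1..n} P"
begin

lemma partition_block:
  assumes "B \<in> P"
  shows "finite B" "B \<noteq> {}" "B \<subseteq> {1..n}"
  using assms P finite_subset[of B "{1..n}"] by (auto simp: partition_on_def)

lemma partition_block_unique: "B \<in> P \<Longrightarrow> B' \<in> P \<Longrightarrow> x \<in> B \<Longrightarrow> x \<in> B' \<Longrightarrow> B = B'"
  using P unfolding partition_on_def by (meson disjointD disjoint_iff)

lemma partition_block_exists:
  assumes "x \<in> {1..n}"
  obtains B where "B \<in> P" "x \<in> B"
  using assms P unfolding partition_on_def by blast

lemma edges_in_block:
  assumes "(a, b) \<in> edges P" "B \<in> P" "a \<in> B \<or> b \<in> B"
  shows "a \<in> B" "b \<in> B" "a < b" "\<forall>k\<in>B. \<not> (a < k \<and> k < b)"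
proof -
  obtain B' where "B' \<in> P" "a \<in> B'" "b \<in> B'" "a < b" "\<forall>k\<in>B'. \<not> (a < k \<and> k < b)"
    using assms(1) unfolding edges_def by blast
  moreover have "B' = B" using partition_block_unique assms(2,3) calculation by blast
  ultimately show "a \<in> B" "b \<in> B" "a < b" "\<forall>k\<in>B. \<not> (a < k \<and> k < b)" by auto
qed

lemma edges_subset: "edges P \<subseteq> {1..n} \<times> {1..n}"
  using partition_block(3) unfolding edges_def by blast

lemma arc_diagram_edges: "arc_diagram (edges P)"
proof -
  have "b = b'" if ab: "(a, b) \<in> edges P" "(a, b') \<in> edges P" for a b b'
  proof -
    obtain B where "B \<in> P" "a \<in> B" using ab(1) unfolding edges_def by blast
    then show ?thesis using edges_in_block[OF ab(1)] edges_in_block[OF ab(2)]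
      by (meson linorder_neqE_nat)
  qed
  moreover have "a = a'" if ab: "(a, b) \<in> edges P" "(a', b) \<in> edges P" for a a' b
  proof -
    obtain B where "B \<in> P" "b \<in> B" using ab(1) unfolding edges_def by blast
    then show ?thesis using edges_in_block[OF ab(1)] edges_in_block[OF ab(2)]
      by (meson linorder_neqE_nat)
  qed
  moreover have "\<forall>(a, b) \<in> edges P. a < b" unfolding edges_def by blast
  ultimately show ?thesis unfolding arc_diagram_def single_valued_def by blast
qed

lemma Range_edges_iff:
  assumes B: "B \<in> P" "m \<in> B"
  shows "m \<in> Range (edges P) \<longleftrightarrow> m \<noteq> Min B"
proof
  assume "m \<in> Range (edges P)"
  then obtain a where a: "(a, m) \<in> edges P" by blast
  then have "a \<in> B" "a < m" using edges_in_block[OF a B(1)] B(2) by auto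
  moreover have "Min B \<le> a" using Min_le partition_block[OF B(1)] \<open>a \<in> B\<close> by blast
  ultimately show "m \<noteq> Min B" by simp
next
  assume "m \<noteq> Min B"
  have fin: "finite B" "B \<noteq> {}" using partition_block[OF B(1)] by auto
  let ?S = "{k \<in> B. k < m}"
  have "Min B < m" using Min_le[OF fin(1) B(2)] \<open>m \<noteq> Min B\<close> by simp
  then have S: "finite ?S" "?S \<noteq> {}" using fin(1) Min_in[OF fin] by auto
  have "(Max ?S, m) \<in> edges P"
  proof (rule edgesI[OF B(1) _ B(2)])
    show "Max ?S \<in> B" "Max ?S < m" using Max_in[OF S] by auto
    show "\<not> (Max ?S < k \<and> k < m)" if "k \<in> B" for k
      using that leD[OF Max_ge[OF S(1)]] by blast
  qed
  then show "m \<in> Range (edges P)" by blast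
qed

lemma Domain_edges_iff:
  assumes B: "B \<in> P" "m \<in> B"
  shows "m \<in> Domain (edges P) \<longleftrightarrow> m \<noteq> Max B"
proof
  assume "m \<in> Domain (edges P)"
  then obtain b where b: "(m, b) \<in> edges P" by blast
  then have "b \<in> B" "m < b" using edges_in_block[OF b B(1)] B(2) by auto
  moreover have "b \<le> Max B" using Max_ge partition_block[OF B(1)] \<open>b \<in> B\<close> by blast
  ultimately show "m \<noteq> Max B" by simp
next
  assume "m \<noteq> Max B"
  have fin: "finite B" "B \<noteq> {}" using partition_block[OF B(1)] by auto
  let ?S = "{k \<in> B. m < k}"
  have "m < Max B" using Max_ge[OF fin(1) B(2)] \<open>m \<noteq> Max B\<close> by simp
  then have S: "finite ?S" "?S \<noteq> {}" using fin(1) Max_in[OF fin] by auto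
  have "(m, Min ?S) \<in> edges P"
  proof (rule edgesI[OF B(1) B(2)])
    show "Min ?S \<in> B" "m < Min ?S" using Min_in[OF S] by auto
    show "\<not> (m < k \<and> k < Min ?S)" if "k \<in> B" for k
      using that leD[OF Min_le[OF S(1)]] by blast
  qed
  then show "m \<in> Domain (edges P)" by blast
qed

lemma block_of_endpoint:
  assumes "m \<in> Domain (edges P) \<or> m \<in> Range (edges P)"
  obtains B where "B \<in> P" "m \<in> B"
  using assms edges_subset partition_block_exists by blast

lemma opener_iff: "opener P m \<longleftrightarrow> m \<in> Domain (edges P) \<and> m \<notin> Range (edges P)"
proof
  assume "opener P m"
  then obtain B where B: "B \<in> P" "2 \<le> card B" "m = Min B" unfolding opener_def by blast
  have fin: "finite B" "B \<noteq> {}" using partition_block[OF B(1)] by auto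
  then have "m \<in> B" "m \<noteq> Max B" using B two_le_card_iff_Min_neq_Max[OF fin] by auto
  then show "m \<in> Domain (edges P) \<and> m \<notin> Range (edges P)"
    using Range_edges_iff[OF B(1)] Domain_edges_iff[OF B(1)] B(3) by blast
next
  assume m: "m \<in> Domain (edges P) \<and> m \<notin> Range (edges P)"
  then obtain B where B: "B \<in> P" "m \<in> B" using block_of_endpoint by blast
  have fin: "finite B" "B \<noteq> {}" using partition_block[OF B(1)] by auto
  have "m = Min B" "m \<noteq> Max B" using Range_edges_iff[OF B] Domain_edges_iff[OF B] m by auto
  then have "2 \<le> card B" using two_le_card_iff_Min_neq_Max[OF fin] by simp
  then show "opener P m" unfolding opener_def using B(1) \<open>m = Min B\<close> by blast
qed

lemma transient_iff: "transient P m \<longleftrightarrow> m \<in> Domain (edges P) \<and> m \<in> Range (edges P)"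
proof
  assume "transient P m"
  then obtain B where "B \<in> P" "m \<in> B" "m \<noteq> Min B" "m \<noteq> Max B" unfolding transient_def by blast
  then show "m \<in> Domain (edges P) \<and> m \<in> Range (edges P)"
    using Range_edges_iff Domain_edges_iff by blast
next
  assume m: "m \<in> Domain (edges P) \<and> m \<in> Range (edges P)"
  then obtain B where B: "B \<in> P" "m \<in> B" using block_of_endpoint by blast
  have fin: "finite B" "B \<noteq> {}" using partition_block[OF B(1)] by auto
  have ne: "m \<noteq> Min B" "m \<noteq> Max B" using Range_edges_iff[OF B] Domain_edges_iff[OF B] m by auto
  then have "Min B < m" using Min_le[OF fin(1) B(2)] by simp
  also have "m \<le> Max B" using Max_ge[OF fin(1) B(2)] .
  finally have "2 \<le> card B" using two_le_card_iff_Min_neq_Max[OF fin] by simp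
  then show "transient P m" unfolding transient_def using B ne by blast
qed

lemma closer_or_transient_iff: "closer P m \<or> transient P m \<longleftrightarrow> m \<in> Range (edges P)"
proof
  assume "closer P m \<or> transient P m"
  then obtain B where B: "B \<in> P" "m \<in> B" "m \<noteq> Min B"
  proof
    assume "closer P m"
    then obtain B where B: "B \<in> P" "2 \<le> card B" "m = Max B" unfolding closer_def by blast
    have fin: "finite B" "B \<noteq> {}" using partition_block[OF B(1)] by auto
    show thesis
      using that[OF B(1)] Max_in[OF fin] B two_le_card_iff_Min_neq_Max[OF fin] by auto
  qed (auto simp: transient_def)
  then show "m \<in> Range (edges P)" using Range_edges_iff by blast
next
  assume m: "m \<in> Range (edges P)"
  then obtain B where B: "B \<in> P" "m \<in> B" using block_of_endpoint by blast
  have fin: "finite B" "B \<noteq> {}" using partition_block[OF B(1)] by auto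
  have "m \<noteq> Min B" using Range_edges_iff[OF B] m by auto
  then have "Min B < m" using Min_le[OF fin(1) B(2)] by simp
  also have "m \<le> Max B" using Max_ge[OF fin(1) B(2)] .
  finally have "2 \<le> card B" using two_le_card_iff_Min_neq_Max[OF fin] by simp
  then show "closer P m \<or> transient P m"
    unfolding closer_def transient_def using B \<open>m \<noteq> Min B\<close> by blast
qed

end

section \<open>The construction of phi\<close>

abbreviation phi_open :: "nat set set \<Rightarrow> nat \<Rightarrow> nat set" where
  "phi_open P i \<equiv> fst (phi_state P i)"

abbreviation phi_edges :: "nat set set \<Rightarrow> nat \<Rightarrow> (nat \<times> nat) set" where
  "phi_edges P i \<equiv> snd (phi_state P i)"

definition phi_pick :: "nat set set \<Rightarrow> nat \<Rightarrow> nat" where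
  "phi_pick P i = rev (sorted_list_of_set (phi_open P i)) ! (gamma P (Suc i) - 1)"

lemma phi_state_Suc_opener:
  "opener P (Suc i) \<Longrightarrow> phi_state P (Suc i) = (insert (Suc i) (phi_open P i), phi_edges P i)"
  by (cases "phi_state P i") (simp add: Let_def)

lemma phi_state_Suc_closer_or_transient:
  assumes "\<not> opener P (Suc i)" "closer P (Suc i) \<or> transient P (Suc i)"
  shows "phi_state P (Suc i) =
    ((if transient P (Suc i) then insert (Suc i) else id) (phi_open P i - {phi_pick P i}),
     insert (phi_pick P i, Suc i) (phi_edges P i))"
  using assms by (cases "phi_state P i") (simp add: Let_def phi_pick_def)

lemma phi_state_Suc_other:
  "\<not> opener P (Suc i) \<Longrightarrow> \<not> (closer P (Suc i) \<or> transient P (Suc i)) \<Longrightarrow>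
    phi_state P (Suc i) = phi_state P i"
  by (cases "phi_state P i") (simp add: Let_def)

lemma phi_edges_Suc:
  "phi_edges P (Suc i) = phi_edges P i \<or> phi_edges P (Suc i) = insert (phi_pick P i, Suc i) (phi_edges P i)"
  using phi_state_Suc_opener phi_state_Suc_closer_or_transient phi_state_Suc_other
  by (metis snd_conv)

lemma phi_edges_le: "(a, b) \<in> phi_edges P i \<Longrightarrow> b \<le> i"
  by (induction i) (use phi_edges_Suc in fastforce)+

lemma phi_edges_restrict: "k \<le> i \<Longrightarrow> phi_edges P k = {(a, b) \<in> phi_edges P i. b \<le> k}"
proof (induction i)
  case 0
  then show ?case using phi_edges_le[of _ _ P 0] by auto
next
  case (Suc i)
  show ?case
  proof (cases "k = Suc i")
    case True
    then show ?thesis using phi_edges_le[of _ _ P "Suc i"] by auto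
  next
    case False
    then show ?thesis using Suc phi_edges_Suc[of P i] by auto
  qed
qed

definition phi_invariant :: "nat set set \<Rightarrow> nat \<Rightarrow> bool" where
  "phi_invariant P i \<longleftrightarrow>
     phi_open P i = {x \<in> Domain (edges P). x \<le> i} - Domain (phi_edges P i) \<and>
     card (phi_open P i) = card (vacant P (Suc i)) \<and>
     arc_diagram (phi_edges P i) \<and>
     Range (phi_edges P i) = {m \<in> Range (edges P). m \<le> i} \<and>
     Domain (phi_edges P i) \<subseteq> Domain (edges P)"

lemma phi_edges_Domain_less:
  "arc_diagram (phi_edges P i) \<Longrightarrow> (a, b) \<in> phi_edges P i \<Longrightarrow> a < i"
  using arc_diagram_less phi_edges_le by fastforce

context
  fixes n :: nat and P :: "nat set set"
  assumes P: "partition_on {1..n} P"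
begin

lemma phi_invariant_0: "phi_invariant P 0"
proof -
  have "0 \<notin> Domain (edges P)" "0 \<notin> Range (edges P)" using edges_subset[OF P] by fastforce+
  moreover from this have "vacant P 1 = {}" unfolding vacant_def by auto
  ultimately show ?thesis unfolding phi_invariant_def arc_diagram_def by auto
qed

lemma phi_invariant_Suc_opener:
  assumes I: "phi_invariant P i" and op: "opener P (Suc i)"
  shows "phi_invariant P (Suc i)"
proof -
  let ?m = "Suc i" and ?V = "phi_open P i" and ?E = "phi_edges P i"
  have m: "?m \<in> Domain (edges P)" "?m \<notin> Range (edges P)" using op opener_iff[OF P] by auto
  have "vacant P (Suc ?m) = insert ?m (vacant P ?m)"
    using m vacant_Suc[OF arc_diagram_edges[OF P]] by auto
  moreover have "?m \<notin> vacant P ?m" unfolding vacant_def by simp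
  moreover have "?m \<notin> ?V" "?m \<notin> Domain ?E"
    using I phi_edges_Domain_less unfolding phi_invariant_def by fastforce+
  ultimately show ?thesis
    using I m finite_vacant unfolding phi_invariant_def phi_state_Suc_opener[OF op]
    by (auto simp: le_Suc_eq)
qed

lemma phi_pick_mem:
  assumes I: "phi_invariant P i" and a: "(a, Suc i) \<in> edges P"
  shows "phi_pick P i \<in> phi_open P i"
proof -
  have "finite (phi_open P i)"
    using I unfolding phi_invariant_def by (auto intro: finite_subset[of _ "{..i}"])
  moreover have "gamma P (Suc i) - 1 < card (phi_open P i)"
    using I gamma_rank[OF arc_diagram_edges[OF P] a] unfolding phi_invariant_def by auto
  ultimately show ?thesis
    unfolding phi_pick_def using nth_mem[of _ "rev (sorted_list_of_set (phi_open P i))"] by simp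
qed

lemma phi_invariant_Suc_closer_or_transient:
  assumes I: "phi_invariant P i" and a: "(a, Suc i) \<in> edges P"
  shows "phi_invariant P (Suc i)"
proof -
  let ?m = "Suc i" and ?V = "phi_open P i" and ?E = "phi_edges P i" and ?x = "phi_pick P i"
  let ?D = "Domain (edges P)"
  let ?V' = "(if ?m \<in> ?D then insert ?m else id) (?V - {?x})"
  have mR: "?m \<in> Range (edges P)" using a by blast
  have nop: "\<not> opener P ?m" and ct: "closer P ?m \<or> transient P ?m"
    using mR opener_iff[OF P] closer_or_transient_iff[OF P] by auto
  have tr: "transient P ?m \<longleftrightarrow> ?m \<in> ?D" using mR transient_iff[OF P] by blast
  have x: "?x \<in> ?V" using phi_pick_mem[OF I a] .
  have inv: "?V = {x \<in> ?D. x \<le> i} - Domain ?E" "card ?V = card (vacant P ?m)"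
    "arc_diagram ?E" "Range ?E = {m \<in> Range (edges P). m \<le> i}" "Domain ?E \<subseteq> ?D"
    using I unfolding phi_invariant_def by auto
  have "{a'. (a', ?m) \<in> edges P} = {a}"
    using a arc_diagram_left_unique[OF arc_diagram_edges[OF P]] by blast
  then have vac: "vacant P (Suc ?m) = (vacant P ?m - {a}) \<union> {?m} \<inter> ?D"
    using vacant_Suc[OF arc_diagram_edges[OF P]] by simp
  have "a \<in> vacant P ?m" "?m \<notin> vacant P ?m"
    using a arc_diagram_less[OF arc_diagram_edges[OF P] a] unfolding vacant_def by auto
  then have card_vac: "card (vacant P (Suc ?m)) = card (vacant P ?m) - 1 + (if ?m \<in> ?D then 1 else 0)"
    unfolding vac using finite_vacant by (auto simp: card_insert_if)
  have "?m \<notin> Domain ?E" using phi_edges_Domain_less[OF inv(3)] by fastforce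
  moreover have "card ?V' = card ?V - 1 + (if ?m \<in> ?D then 1 else 0)"
    using x inv(1) by (auto simp: card_insert_if intro: finite_subset[of _ "{..i}"])
  ultimately show ?thesis
    unfolding phi_invariant_def phi_state_Suc_closer_or_transient[OF nop ct] fst_conv snd_conv tr
    using inv x card_vac mR arc_diagram_insert[OF inv(3), of ?x ?m]
    by (auto simp: le_Suc_eq)
qed

lemma phi_invariant_Suc_other:
  assumes I: "phi_invariant P i" and m: "Suc i \<notin> Domain (edges P)" "Suc i \<notin> Range (edges P)"
  shows "phi_invariant P (Suc i)"
proof -
  have "\<not> opener P (Suc i)" "\<not> (closer P (Suc i) \<or> transient P (Suc i))"
    using m opener_iff[OF P] closer_or_transient_iff[OF P] by auto
  moreover have "vacant P (Suc (Suc i)) = vacant P (Suc i)"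
    using m vacant_Suc[OF arc_diagram_edges[OF P]] by auto
  ultimately show ?thesis
    using I m unfolding phi_invariant_def phi_state_Suc_other by (auto simp: le_Suc_eq)
qed

lemma phi_invariant: "phi_invariant P i"
proof (induction i)
  case 0
  show ?case by (rule phi_invariant_0)
next
  case (Suc i)
  consider "opener P (Suc i)" | a where "(a, Suc i) \<in> edges P"
    | "Suc i \<notin> Domain (edges P)" "Suc i \<notin> Range (edges P)"
    using opener_iff[OF P] by blast
  then show ?case
    using phi_invariant_Suc_opener phi_invariant_Suc_closer_or_transient phi_invariant_Suc_other Suc
    by cases blast+
qed

lemma Domain_phi_edges: "Domain (phi_edges P n) = Domain (edges P)"
proof -
  have inv: "phi_open P n = {x \<in> Domain (edges P). x \<le> n} - Domain (phi_edges P n)"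
    "card (phi_open P n) = card (vacant P (Suc n))" "Domain (phi_edges P n) \<subseteq> Domain (edges P)"
    using phi_invariant[of n] unfolding phi_invariant_def by blast+
  have "vacant P (Suc n) = {}" unfolding vacant_def using edges_subset[OF P] by fastforce
  then have "phi_open P n = {}" using inv(1,2) by (simp add: finite_subset[of _ "{..n}"])
  moreover have "x \<le> n" if "x \<in> Domain (edges P)" for x using that edges_subset[OF P] by fastforce
  ultimately show ?thesis using inv(1,3) by blast
qed

lemma edges_phi: "edges (phi n P) = phi_edges P n"
  unfolding phi_def
proof (rule edges_partition_of_edges)
  show "arc_diagram (phi_edges P n)" using phi_invariant unfolding phi_invariant_def by blast
  show "Domain (phi_edges P n) \<subseteq> {1..n}" using Domain_phi_edges edges_subset[OF P] by blast
qed

lemma arc_diagram_edges_phi: "arc_diagram (edges (phi n P))"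
  using phi_invariant unfolding edges_phi phi_invariant_def by blast

lemma vacant_phi:
  assumes "Suc i \<in> Range (edges P)"
  shows "vacant (phi n P) (Suc i) = phi_open P i"
proof -
  have "Suc i \<le> n" using assms edges_subset[OF P] by fastforce
  then have restrict: "phi_edges P i = {(a, b) \<in> phi_edges P n. b \<le> i}"
    by (intro phi_edges_restrict) simp
  have E: "arc_diagram (phi_edges P n)" using arc_diagram_edges_phi unfolding edges_phi .
  have V: "phi_open P i = {x \<in> Domain (edges P). x \<le> i} - Domain (phi_edges P i)"
    using phi_invariant unfolding phi_invariant_def by blast
  show ?thesis
  proof (intro set_eqI iffI)
    fix x
    assume "x \<in> vacant (phi n P) (Suc i)"
    then obtain y where xy: "x \<le> i" "(x, y) \<in> phi_edges P n" "Suc i \<le> y"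
      unfolding vacant_def edges_phi by auto
    then have "x \<notin> Domain (phi_edges P i)"
      unfolding restrict using arc_diagram_right_unique[OF E xy(2)] by fastforce
    then show "x \<in> phi_open P i" unfolding V using xy Domain_phi_edges by blast
  next
    fix x
    assume "x \<in> phi_open P i"
    then have x: "x \<le> i" "x \<in> Domain (phi_edges P n)" "x \<notin> Domain (phi_edges P i)"
      unfolding V Domain_phi_edges by auto
    then obtain y where "(x, y) \<in> phi_edges P n" by blast
    moreover from this have "\<not> y \<le> i" using x(3) unfolding restrict by blast
    ultimately show "x \<in> vacant (phi n P) (Suc i)" unfolding vacant_def edges_phi using x by auto
  qed
qed

lemma card_vacant_phi:
  assumes a: "(a, j) \<in> edges P"
  shows "card (vacant (phi n P) j) = card (vacant P j)"
proof -
  obtain i where j: "j = Suc i" using arc_diagram_less[OF arc_diagram_edges[OF P] a] by (cases j) auto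
  moreover have "card (phi_open P i) = card (vacant P (Suc i))"
    using phi_invariant unfolding phi_invariant_def by blast
  moreover have "vacant (phi n P) j = phi_open P i" using vacant_phi a j by blast
  ultimately show ?thesis by simp
qed

lemma phi_edge_to:
  assumes a: "(a, j) \<in> edges P"
  shows "(rev (sorted_list_of_set (vacant (phi n P) j)) ! (gamma P j - 1), j) \<in> edges (phi n P)"
proof -
  obtain i where j: "j = Suc i" using arc_diagram_less[OF arc_diagram_edges[OF P] a] by (cases j) auto
  have "j \<le> n" using a edges_subset[OF P] by auto
  have "\<not> opener P j" "closer P j \<or> transient P j"
    using a opener_iff[OF P] closer_or_transient_iff[OF P] by auto
  then have "(phi_pick P i, j) \<in> phi_edges P j"
    using phi_state_Suc_closer_or_transient j by simp
  then have "(phi_pick P i, j) \<in> edges (phi n P)"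
    unfolding edges_phi using phi_edges_restrict[OF \<open>j \<le> n\<close>, of P] by blast
  moreover have "vacant (phi n P) j = phi_open P i" using vacant_phi a j by blast
  ultimately show ?thesis using j unfolding phi_pick_def by simp
qed

end

theorem lemma2p2:
  fixes n j :: nat and P :: "nat set set"
  assumes "n \<ge> 1" and "partition_on {1..n} P" and "closer P j \<or> transient P j"
  shows "al (phi n P) j = al P j \<and> cr (phi n P) j = ne P j \<and> ne (phi n P) j = cr P j"
proof -
  note P = assms(2)
  obtain a where a: "(a, j) \<in> edges P" using assms(3) closer_or_transient_iff[OF P] by blast
  let ?\<gamma> = "gamma P j" and ?W = "vacant P j" and ?V = "vacant (phi n P) j"
  have \<gamma>: "1 \<le> ?\<gamma>" "?\<gamma> \<le> card ?W" "sorted_list_of_set ?W ! (?\<gamma> - 1) = a"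
    using gamma_rank[OF arc_diagram_edges[OF P] a] by auto
  have V: "finite ?V" "card ?V = card ?W" using finite_vacant card_vacant_phi[OF P a] by auto
  let ?x = "rev (sorted_list_of_set ?V) ! (?\<gamma> - 1)"
  have x: "(?x, j) \<in> edges (phi n P)" using phi_edge_to[OF P a] .
  note E = arc_diagram_edges[OF P] and E' = arc_diagram_edges_phi[OF P]
  have "cr (phi n P) j = card {y \<in> ?V. ?x < y}" by (rule cr_eq_card_vacant_greater[OF E' x])
  also have "\<dots> = ?\<gamma> - 1" using card_greater_rev_sorted_list_of_set_nth[OF V(1)] \<gamma> V(2) by simp
  also have "\<dots> = card {y \<in> ?W. y < a}"
    using card_less_sorted_list_of_set_nth[OF finite_vacant[of P j], of "?\<gamma> - 1"] \<gamma> by simp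
  also have "\<dots> = ne P j" by (rule ne_eq_card_vacant_less[OF E a, symmetric])
  finally have cr: "cr (phi n P) j = ne P j" .
  have "ne (phi n P) j = card {y \<in> ?V. y < ?x}" by (rule ne_eq_card_vacant_less[OF E' x])
  also have "\<dots> = card ?W - ?\<gamma>" using card_less_rev_sorted_list_of_set_nth[OF V(1)] \<gamma> V(2) by simp
  also have "\<dots> = card {y \<in> ?W. a < y}"
    using card_greater_sorted_list_of_set_nth[OF finite_vacant[of P j], of "?\<gamma> - 1"] \<gamma> by simp
  also have "\<dots> = cr P j" by (rule cr_eq_card_vacant_greater[OF E a, symmetric])
  finally have ne: "ne (phi n P) j = cr P j" .
  have "al (phi n P) j = al P j"
    using al_eq_card_Domain[OF E' x] al_eq_card_Domain[OF E a] Domain_phi_edges[OF P]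
    unfolding edges_phi[OF P] by simp
  with cr ne show ?thesis by blast
qed

end
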